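(* Let $n\ge3$ and let $f$ be a $\gamma_{tr3}(P_3\square P_n)$-function such that the number of vertices $v$ with $f(v)=\emptyset$ is minimum among all $\gamma_{tr3}(P_3\square P_n)$-functions. Then $|f((2,j))|\in\{0,1\}$ for every $j\in\{0,1,\dots,n-1\}$.
   Context: $P_m$ denotes the directed path with vertex set $\{0,1,\dots,m-1\}$ and arcs $(i,i+1)$ for $0\le i\le m-2$. The Cartesian product $D_1\square D_2$ has vertex set $V(D_1)\times V(D_2)$, with an arc from $(x_1,y_1)$ to $(x_2,y_2)$ iff either $(x_1,x_2)$ is an arc of $D_1$ and $y_1=y_2$, or $x_1=x_2$ and $(y_1,y_2)$ is an arc of $D_2$. For a digraph $D$ and positive integer $k$, a $k$-rainbow dominating function on $D$ is $f:V(D)\to\mathcal P(\{1,\dots,k\})$ such that every $v$ with $f(v)=\emptyset$ satisfies $\bigcup_{u\in N^-(v)}f(u)=\{1,\dots,k\}$, where $N^-(v)$ is the set of in-neighbors of $v$; its weight is $\sum_v|f(v)|$. It is total if additionally the subdigraph induced by $\{v:f(v)\ne\emptyset\}$ has no isolated vertex (a vertex with neither in- nor out-neighbors in it). $\gamma_{trk}(D)$ is the minimum weight of a total $k$-rainbow dominating function, and a $\gamma_{trk}(D)$-function is one attaining it. *)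

theory Defs
  imports Main
begin

type_synonym 'a digraph = "'a set \<times> ('a \<times> 'a) set"

definition verts :: "'a digraph \<Rightarrow> 'a set" where "verts D = fst D"
definition arcs :: "'a digraph \<Rightarrow> ('a \<times> 'a) set" where "arcs D = snd D"

definition dpath :: "nat \<Rightarrow> nat digraph" where
  "dpath m = ({0..<m}, {(i, Suc i) | i. Suc i < m})"

definition cart_prod :: "'a digraph \<Rightarrow> 'b digraph \<Rightarrow> ('a \<times> 'b) digraph" where
  "cart_prod D1 D2 = (verts D1 \<times> verts D2,
     {((x1, y1), (x2, y2)) | x1 y1 x2 y2.
        ((x1, x2) \<in> arcs D1 \<and> y1 = y2 \<and> y1 \<in> verts D2) \<or>
        (x1 = x2 \<and> x1 \<in> verts D1 \<and> (y1, y2) \<in> arcs D2)})"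

definition in_nbrs :: "'a digraph \<Rightarrow> 'a \<Rightarrow> 'a set" where
  "in_nbrs D v = {u \<in> verts D. (u, v) \<in> arcs D}"

definition rainbow_dom :: "nat \<Rightarrow> 'a digraph \<Rightarrow> ('a \<Rightarrow> nat set) \<Rightarrow> bool" where
  "rainbow_dom k D f \<longleftrightarrow>
     (\<forall>v \<in> verts D. f v \<subseteq> {1..k}) \<and>
     (\<forall>v \<in> verts D. f v = {} \<longrightarrow> (\<Union>u \<in> in_nbrs D v. f u) = {1..k})"

text \<open>Total: no vertex with nonempty label is isolated in the subdigraph induced by such vertices.\<close>
definition total_rainbow_dom :: "nat \<Rightarrow> 'a digraph \<Rightarrow> ('a \<Rightarrow> nat set) \<Rightarrow> bool" where
  "total_rainbow_dom k D f \<longleftrightarrow> rainbow_dom k D f \<and>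
     (\<forall>v \<in> verts D. f v \<noteq> {} \<longrightarrow>
        (\<exists>u \<in> verts D. u \<noteq> v \<and> f u \<noteq> {} \<and> ((u, v) \<in> arcs D \<or> (v, u) \<in> arcs D)))"

definition rd_weight :: "'a digraph \<Rightarrow> ('a \<Rightarrow> nat set) \<Rightarrow> nat" where
  "rd_weight D f = (\<Sum>v \<in> verts D. card (f v))"

definition gamma_trk :: "nat \<Rightarrow> 'a digraph \<Rightarrow> nat" where
  "gamma_trk k D = Inf {rd_weight D f | f. total_rainbow_dom k D f}"

definition gamma_trk_function :: "nat \<Rightarrow> 'a digraph \<Rightarrow> ('a \<Rightarrow> nat set) \<Rightarrow> bool" where
  "gamma_trk_function k D f \<longleftrightarrow> total_rainbow_dom k D f \<and> rd_weight D f = gamma_trk k D"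

definition empty_count :: "'a digraph \<Rightarrow> ('a \<Rightarrow> nat set) \<Rightarrow> nat" where
  "empty_count D f = card {v \<in> verts D. f v = {}}"

end

theory Submission
  imports Defs
begin

text \<open>In a minimum-weight total rainbow dominating function with the fewest empty vertices, a
  vertex of out-degree at most one carries at most one colour. Otherwise keep one colour \<open>a\<close> on it.
  If its out-neighbour is empty, hand the remaining colours over to that neighbour: the weight stays
  the same and one empty vertex disappears. If not, no empty vertex relies on the removed colours,
  and the weight drops. In \<open>P\<^sub>3 \<box> P\<^sub>n\<close> every vertex of the last row has out-degree at most
  one, for every \<open>n\<close>.\<close>

definition out_nbrs :: "'a digraph \<Rightarrow> 'a \<Rightarrow> 'a set" where
  "out_nbrs D v = {w \<in> verts D. (v, w) \<in> arcs D}"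

lemma gamma_trk_le_rd_weight:
  assumes "total_rainbow_dom k D g"
  shows "gamma_trk k D \<le> rd_weight D g"
  unfolding gamma_trk_def using assms by (intro cInf_lower) auto

lemma total_rainbow_dom_fill:
  assumes tr: "total_rainbow_dom k D f" and empty: "f v = {}"
    and T: "T \<noteq> {}" "T \<subseteq> {1..k}"
    and u: "u \<in> verts D" "f u \<noteq> {}" "(u, v) \<in> arcs D \<or> (v, u) \<in> arcs D"
  shows "total_rainbow_dom k D (f(v := T))"
proof -
  let ?g = "f(v := T)"
  have sub: "\<forall>x \<in> verts D. f x \<subseteq> {1..k}"
    and dom: "\<forall>x \<in> verts D. f x = {} \<longrightarrow> (\<Union>y \<in> in_nbrs D x. f y) = {1..k}"
    and tot: "\<forall>x \<in> verts D. f x \<noteq> {} \<longrightarrow>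
        (\<exists>y \<in> verts D. y \<noteq> x \<and> f y \<noteq> {} \<and> ((y, x) \<in> arcs D \<or> (x, y) \<in> arcs D))"
    using tr unfolding total_rainbow_dom_def rainbow_dom_def by auto
  have grows: "f x \<subseteq> ?g x" for x using empty by auto
  have sub_g: "\<forall>x \<in> verts D. ?g x \<subseteq> {1..k}" using sub T by auto
  have "\<forall>x \<in> verts D. ?g x = {} \<longrightarrow> (\<Union>y \<in> in_nbrs D x. ?g y) = {1..k}"
  proof (intro ballI impI)
    fix x assume x: "x \<in> verts D" "?g x = {}"
    have "(\<Union>y \<in> in_nbrs D x. f y) \<subseteq> (\<Union>y \<in> in_nbrs D x. ?g y)"
      using grows by (intro UN_mono) auto
    moreover have "(\<Union>y \<in> in_nbrs D x. ?g y) \<subseteq> {1..k}"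
      using sub_g unfolding in_nbrs_def by blast
    moreover have "f x = {}" using x(2) grows by blast
    ultimately show "(\<Union>y \<in> in_nbrs D x. ?g y) = {1..k}" using dom x(1) by auto
  qed
  moreover have "\<forall>x \<in> verts D. ?g x \<noteq> {} \<longrightarrow>
      (\<exists>y \<in> verts D. y \<noteq> x \<and> ?g y \<noteq> {} \<and> ((y, x) \<in> arcs D \<or> (x, y) \<in> arcs D))"
  proof (intro ballI impI)
    fix x assume x: "x \<in> verts D" "?g x \<noteq> {}"
    show "\<exists>y \<in> verts D. y \<noteq> x \<and> ?g y \<noteq> {} \<and> ((y, x) \<in> arcs D \<or> (x, y) \<in> arcs D)"
    proof (cases "x = v")
      case True
      then show ?thesis using u empty by (intro bexI[of _ u]) auto
    next
      case False
      then have "f x \<noteq> {}" using x(2) by simp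
      then obtain y where "y \<in> verts D" "y \<noteq> x" "f y \<noteq> {}" "(y, x) \<in> arcs D \<or> (x, y) \<in> arcs D"
        using tot x(1) by blast
      then show ?thesis using grows by blast
    qed
  qed
  ultimately show ?thesis
    using sub_g unfolding total_rainbow_dom_def rainbow_dom_def by (intro conjI)
qed

lemma total_rainbow_dom_shrink:
  assumes tr: "total_rainbow_dom k D f" and S: "S \<noteq> {}" "S \<subseteq> f v"
    and out: "\<forall>w \<in> out_nbrs D v. f w \<noteq> {}"
  shows "total_rainbow_dom k D (f(v := S))"
proof -
  let ?g = "f(v := S)"
  have sub: "\<forall>x \<in> verts D. f x \<subseteq> {1..k}"
    and dom: "\<forall>x \<in> verts D. f x = {} \<longrightarrow> (\<Union>y \<in> in_nbrs D x. f y) = {1..k}"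
    and tot: "\<forall>x \<in> verts D. f x \<noteq> {} \<longrightarrow>
        (\<exists>y \<in> verts D. y \<noteq> x \<and> f y \<noteq> {} \<and> ((y, x) \<in> arcs D \<or> (x, y) \<in> arcs D))"
    using tr unfolding total_rainbow_dom_def rainbow_dom_def by auto
  have same_support: "?g x = {} \<longleftrightarrow> f x = {}" for x using S by auto
  have "\<forall>x \<in> verts D. ?g x \<subseteq> {1..k}" using sub S by (simp add: subset_trans)
  moreover have "\<forall>x \<in> verts D. ?g x = {} \<longrightarrow> (\<Union>y \<in> in_nbrs D x. ?g y) = {1..k}"
  proof (intro ballI impI)
    fix x assume x: "x \<in> verts D" "?g x = {}"
    then have "f x = {}" using same_support by blast
    then have "v \<notin> in_nbrs D x" using out x(1) by (auto simp: in_nbrs_def out_nbrs_def)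
    then have "(\<Union>y \<in> in_nbrs D x. ?g y) = (\<Union>y \<in> in_nbrs D x. f y)"
      by (intro SUP_cong) auto
    then show "(\<Union>y \<in> in_nbrs D x. ?g y) = {1..k}" using dom x(1) \<open>f x = {}\<close> by simp
  qed
  moreover have "\<forall>x \<in> verts D. ?g x \<noteq> {} \<longrightarrow>
      (\<exists>y \<in> verts D. y \<noteq> x \<and> ?g y \<noteq> {} \<and> ((y, x) \<in> arcs D \<or> (x, y) \<in> arcs D))"
    unfolding same_support by (fact tot)
  ultimately show ?thesis unfolding total_rainbow_dom_def rainbow_dom_def by (intro conjI)
qed

lemma rd_weight_fun_upd:
  assumes "finite (verts D)" and "v \<in> verts D"
  shows "rd_weight D (f(v := S)) + card (f v) = rd_weight D f + card S"
proof -
  have "(\<Sum>x \<in> verts D - {v}. card ((f(v := S)) x)) = (\<Sum>x \<in> verts D - {v}. card (f x))"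
    by (intro sum.cong) auto
  then show ?thesis using assms unfolding rd_weight_def by (simp add: sum.remove)
qed

lemma empty_count_less:
  assumes "finite (verts D)" and "v \<in> verts D" "f v = {}" "g v \<noteq> {}"
    and "\<forall>x. f x \<noteq> {} \<longrightarrow> g x \<noteq> {}"
  shows "empty_count D g < empty_count D f"
  unfolding empty_count_def using assms by (intro psubset_card_mono) auto

lemma gamma_trk_function_card_le_1:
  assumes fin: "finite (verts D)" and f: "gamma_trk_function k D f"
    and fewest_empty: "\<forall>g. gamma_trk_function k D g \<longrightarrow> empty_count D f \<le> empty_count D g"
    and v: "v \<in> verts D" and deg: "card (out_nbrs D v) \<le> 1"
  shows "card (f v) \<le> 1"
proof (rule ccontr)
  assume "\<not> card (f v) \<le> 1"
  then have big: "card (f v) \<ge> 2" by simp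
  then obtain a where a: "a \<in> f v" by fastforce
  have fv_minus: "f v - {a} \<noteq> {}"
  proof
    assume "f v - {a} = {}"
    then have "card (f v) \<le> card {a}" by (intro card_mono) auto
    then show False using big by simp
  qed
  have tr: "total_rainbow_dom k D f" and wt: "rd_weight D f = gamma_trk k D"
    using f unfolding gamma_trk_function_def by auto
  have labels: "f v \<subseteq> {1..k}"
    using tr v unfolding total_rainbow_dom_def rainbow_dom_def by blast
  show False
  proof (cases "\<exists>w \<in> out_nbrs D v. f w = {}")
    case True
    then obtain w where w: "w \<in> out_nbrs D v" "f w = {}" by blast
    have "finite (out_nbrs D v)" using fin by (simp add: out_nbrs_def)
    then have out: "out_nbrs D v = {w}" using w deg by (auto simp: card_le_Suc0_iff_eq)
    have w_vert: "w \<in> verts D" and arc: "(v, w) \<in> arcs D" and "v \<noteq> w"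
      using w a by (auto simp: out_nbrs_def)
    define g where "g = f(w := f v - {a}, v := {a})"
    have tr_filled: "total_rainbow_dom k D (f(w := f v - {a}))"
      using labels arc a by (intro total_rainbow_dom_fill[OF tr w(2) fv_minus _ v]) auto
    have "\<forall>x \<in> out_nbrs D v. (f(w := f v - {a})) x \<noteq> {}"
      using out fv_minus by simp
    then have tr_g: "total_rainbow_dom k D g"
      using total_rainbow_dom_shrink[OF tr_filled, of "{a}" v] a \<open>v \<noteq> w\<close>
      unfolding g_def by simp
    have "rd_weight D g = rd_weight D f"
      using rd_weight_fun_upd[OF fin w_vert, of f "f v - {a}"]
        rd_weight_fun_upd[OF fin v, of "f(w := f v - {a})" "{a}"]
        card_Diff_singleton[OF a] big \<open>v \<noteq> w\<close> w(2)
      unfolding g_def by simp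
    then have "gamma_trk_function k D g" using tr_g wt by (simp add: gamma_trk_function_def)
    moreover have "empty_count D g < empty_count D f"
      using fin w_vert w(2) fv_minus \<open>v \<noteq> w\<close> a unfolding g_def
      by (intro empty_count_less) auto
    ultimately show False using fewest_empty by fastforce
  next
    case False
    then have "total_rainbow_dom k D (f(v := {a}))"
      using a by (intro total_rainbow_dom_shrink[OF tr]) simp_all
    moreover have "rd_weight D (f(v := {a})) < rd_weight D f"
      using rd_weight_fun_upd[OF fin v, of f "{a}"] big by simp
    ultimately show False using gamma_trk_le_rd_weight wt by fastforce
  qed
qed

lemma verts_grid: "verts (cart_prod (dpath m) (dpath n)) = {0..<m} \<times> {0..<n}"
  by (simp add: cart_prod_def verts_def dpath_def)

lemma out_nbrs_grid_last_row:
  "out_nbrs (cart_prod (dpath m) (dpath n)) (m - 1, j) \<subseteq> {(m - 1, Suc j)}"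
  by (auto simp: out_nbrs_def cart_prod_def verts_def arcs_def dpath_def)

theorem lemma4p6:
  fixes n :: nat and f :: "nat \<times> nat \<Rightarrow> nat set"
  assumes "n \<ge> 3"
    and "gamma_trk_function 3 (cart_prod (dpath 3) (dpath n)) f"
    and "\<forall>g. gamma_trk_function 3 (cart_prod (dpath 3) (dpath n)) g \<longrightarrow>
           empty_count (cart_prod (dpath 3) (dpath n)) f \<le> empty_count (cart_prod (dpath 3) (dpath n)) g"
  shows "\<forall>j < n. card (f (2, j)) \<in> {0, 1}"
proof (intro allI impI)
  fix j assume "j < n"
  let ?D = "cart_prod (dpath 3) (dpath n)"
  have "out_nbrs ?D (2, j) \<subseteq> {(2, Suc j)}"
    using out_nbrs_grid_last_row[of 3 n j] by (simp add: numeral_eq_Suc)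
  then have "card (out_nbrs ?D (2, j)) \<le> 1"
    using card_mono[of "{(2, Suc j)}" "out_nbrs ?D (2, j)"] by simp
  moreover have "(2, j) \<in> verts ?D" "finite (verts ?D)"
    using \<open>j < n\<close> by (simp_all add: verts_grid)
  ultimately have "card (f (2, j)) \<le> 1"
    using gamma_trk_function_card_le_1[OF _ assms(2,3)] by blast
  then show "card (f (2, j)) \<in> {0, 1}" by auto
qed

end
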